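(* Let $b>-1$, $b\neq0$, and let $C$ be the curve $y^2+(x^2-1)(x^2+b)=0$; write this equation as $y^2+x^4+Ax^2+B=0$ (so $A=b-1$, $B=-b$). Then the convex hull of $C(\mathbb{R})$ in $\mathbb{R}^2$ is the set of $(x,y)\in\mathbb{R}^2$ for which there exist $u_2,u_3,u_4,v_1,v_2\in\mathbb{R}$ such that $$\begin{pmatrix}1&x&u_2&y\\ x&u_2&u_3&v_1\\ u_2&u_3&u_4&v_2\\ y&v_1&v_2&-B-Au_2-u_4\end{pmatrix}\succeq0.$$
   Context: $S\succeq0$ means the real symmetric matrix $S$ is positive semidefinite. *)

theory Defs
  imports "HOL-Analysis.Analysis"
begin

definition psd :: "nat \<Rightarrow> (nat \<Rightarrow> nat \<Rightarrow> real) \<Rightarrow> bool" where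
  "psd n M \<longleftrightarrow> (\<forall>i<n. \<forall>j<n. M i j = M j i) \<and>
     (\<forall>v :: nat \<Rightarrow> real. 0 \<le> (\<Sum>i<n. \<Sum>j<n. v i * M i j * v j))"

definition mat_of_rows :: "real list list \<Rightarrow> nat \<Rightarrow> nat \<Rightarrow> real" where
  "mat_of_rows rs i j = rs ! i ! j"

end

theory Submission
  imports Defs
begin

text \<open>
  The shadow S is the set of (x, y) admitting a positive
  semidefinite moment matrix M(x, y, u2, u3, u4, v1, v2) indexed by the monomials 1, x, x^2, y,
  with the entry for y^2 replaced by the value -B - A u2 - u4 forced by the curve equation.

  The inclusion conv C \<subseteq> S holds because S is convex (psd matrices form a convex cone
  and M is affine in its parameters) and every curve point lies in S (its moment matrix is
  the rank-one matrix z z^T with z = (1, x, x^2, y)).  Conversely, 2 x 2 principal minors of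
  a psd moment matrix give x^2 \<le> u2 and y^2 \<le> g(u2) := -B - A u2 - u2^2; hence the four
  points (+-sqrt u2, +-sqrt g(u2)) lie on C, and (x, y) lies in the rectangle they span.
  None of this depends on A and B, so the identity conv C = S holds for every quartic of
  this shape.
\<close>

lemma psd_cong:
  assumes "\<And>i j. i < n \<Longrightarrow> j < n \<Longrightarrow> M i j = N i j"
  shows "psd n M \<longleftrightarrow> psd n N"
proof -
  have "(\<Sum>i<n. \<Sum>j<n. v i * M i j * v j) = (\<Sum>i<n. \<Sum>j<n. v i * N i j * v j)" for v
    using assms by (intro sum.cong) auto
  then show ?thesis using assms unfolding psd_def by auto
qed

text \<open>Rank-one matrices z z^T are psd: their quadratic form is (v . z)^2.\<close>
lemma psd_outer: "psd n (\<lambda>i j. z i * z j)"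
proof -
  have "(\<Sum>i<n. \<Sum>j<n. v i * (z i * z j) * v j) = (\<Sum>i<n. v i * z i)\<^sup>2" for v :: "nat \<Rightarrow> real"
    by (simp add: power2_eq_square sum_product algebra_simps)
  then show ?thesis unfolding psd_def by simp
qed

lemma psd_convex_comb:
  assumes "psd n M" "psd n N" "0 \<le> t" "t \<le> 1"
  shows "psd n (\<lambda>i j. (1 - t) * M i j + t * N i j)"
proof -
  have "(\<Sum>i<n. \<Sum>j<n. v i * ((1 - t) * M i j + t * N i j) * v j)
      = (1 - t) * (\<Sum>i<n. \<Sum>j<n. v i * M i j * v j) + t * (\<Sum>i<n. \<Sum>j<n. v i * N i j * v j)"
    for v :: "nat \<Rightarrow> real"
  proof -
    have "v i * ((1 - t) * M i j + t * N i j) * v j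
        = (1 - t) * (v i * M i j * v j) + t * (v i * N i j * v j)" for i j
      by (simp add: algebra_simps)
    then show ?thesis by (simp only: sum.distrib sum_distrib_left)
  qed
  then show ?thesis using assms unfolding psd_def by simp
qed

lemma psd_principal_2x2:
  assumes "psd n M" "i < n" "j < n" "i \<noteq> j"
  shows "0 \<le> a\<^sup>2 * M i i + 2 * a * c * M i j + c\<^sup>2 * M j j"
proof -
  define v where "v = (\<lambda>l. if l = i then a else if l = j then c else 0)"
  have row: "(\<Sum>l<n. v k * M k l * v l) = v k * M k i * a + v k * M k j * c" for k
  proof -
    have "(\<Sum>l<n. v k * M k l * v l) = (\<Sum>l\<in>{i, j}. v k * M k l * v l)"
      by (rule sum.mono_neutral_right) (use assms in \<open>auto simp: v_def\<close>)
    then show ?thesis using assms by (simp add: v_def)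
  qed
  have "0 \<le> (\<Sum>k<n. \<Sum>l<n. v k * M k l * v l)"
    using assms(1) by (simp add: psd_def)
  also have "(\<Sum>k<n. \<Sum>l<n. v k * M k l * v l) = (\<Sum>k\<in>{i, j}. \<Sum>l<n. v k * M k l * v l)"
    by (rule sum.mono_neutral_right) (use assms in \<open>auto simp: v_def\<close>)
  also have "\<dots> = a\<^sup>2 * M i i + 2 * a * c * M i j + c\<^sup>2 * M j j"
    using assms unfolding row psd_def by (simp add: v_def power2_eq_square algebra_simps)
  finally show ?thesis .
qed

lemma psd_entry_sq_le:
  assumes "psd n M" "k < n" "k \<noteq> 0" "M 0 0 = 1"
  shows "(M 0 k)\<^sup>2 \<le> M k k"
  using psd_principal_2x2[OF assms(1) _ assms(2), of 0 "- M 0 k" 1] assms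
  by (simp add: power2_eq_square)

lemma convex_line_segment:
  fixes K :: "'a::real_vector set"
  assumes "convex K" "p + a *\<^sub>R d \<in> K" "p + c *\<^sub>R d \<in> K" "a \<le> t" "t \<le> c"
  shows "p + t *\<^sub>R d \<in> K"
proof (cases "a = c")
  case True
  then show ?thesis using assms by simp
next
  case False
  define u where "u = (t - a) / (c - a)"
  have u: "0 \<le> u" "u \<le> 1" using assms False by (auto simp: u_def field_simps)
  have "u * (c - a) = t - a" using False by (simp add: u_def)
  then have "(1 - u) * a + u * c = t" by (simp add: algebra_simps)
  then have "(1 - u) *\<^sub>R (p + a *\<^sub>R d) + u *\<^sub>R (p + c *\<^sub>R d) = p + t *\<^sub>R d"
    by (simp add: algebra_simps flip: scaleR_add_left)
  then show ?thesis using convexD[OF assms(1-3) _ _, of "1 - u" u] u by simp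
qed

text \<open>A convex set in the plane containing the corners (+-X, +-Y) of a rectangle contains the whole
  rectangle: first along the horizontal edges, then along the vertical segment through (x, y).\<close>
lemma convex_contains_box:
  fixes K :: "(real \<times> real) set"
  assumes "convex K" "(X, Y) \<in> K" "(- X, Y) \<in> K" "(X, - Y) \<in> K" "(- X, - Y) \<in> K"
    and "\<bar>x\<bar> \<le> X" "\<bar>y\<bar> \<le> Y"
  shows "(x, y) \<in> K"
proof -
  have horizontal: "(x, c) \<in> K" if "(- X, c) \<in> K" "(X, c) \<in> K" for c
    using convex_line_segment[OF assms(1), of "(0, c)" "- X" "(1, 0)" X x] that assms(6) by simp
  show ?thesis
    using convex_line_segment[OF assms(1), of "(x, 0)" "- Y" "(0, 1)" Y y]
      horizontal assms by simp
qed

definition quartic_curve :: "real \<Rightarrow> real \<Rightarrow> (real \<times> real) set" where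
  "quartic_curve A B = {(x, y). y\<^sup>2 + x ^ 4 + A * x\<^sup>2 + B = 0}"

text \<open>The moment matrix indexed by 1, x, x^2, y, with the y^2 entry eliminated via the curve equation.\<close>
definition moment_matrix ::
    "real \<Rightarrow> real \<Rightarrow> real \<Rightarrow> real \<Rightarrow> real \<Rightarrow> real \<Rightarrow> real \<Rightarrow> real \<Rightarrow> real \<Rightarrow> nat \<Rightarrow> nat \<Rightarrow> real"
  where "moment_matrix A B x y u2 u3 u4 v1 v2 = mat_of_rows
     [[1,  x,  u2, y],
      [x,  u2, u3, v1],
      [u2, u3, u4, v2],
      [y,  v1, v2, - B - A * u2 - u4]]"

definition moment_shadow :: "real \<Rightarrow> real \<Rightarrow> (real \<times> real) set" where
  "moment_shadow A B =
     {(x, y). \<exists>u2 u3 u4 v1 v2. psd 4 (moment_matrix A B x y u2 u3 u4 v1 v2)}"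

lemma less_4_cases: "(i::nat) < 4 \<Longrightarrow> i = 0 \<or> i = 1 \<or> i = 2 \<or> i = 3"
  by auto

text \<open>Each curve point lifts to its rank-one moment matrix.\<close>
lemma quartic_curve_subset_shadow: "quartic_curve A B \<subseteq> moment_shadow A B"
proof
  fix p assume "p \<in> quartic_curve A B"
  then obtain x y where p: "p = (x, y)" and on_curve: "y\<^sup>2 + x ^ 4 + A * x\<^sup>2 + B = 0"
    by (auto simp: quartic_curve_def)
  define z where "z = (!) [1, x, x\<^sup>2, y]"
  have "- B - A * x\<^sup>2 - x ^ 4 = y * y"
    using on_curve by (simp add: power2_eq_square)
  then have entries: "moment_matrix A B x y (x\<^sup>2) (x ^ 3) (x ^ 4) (x * y) (x\<^sup>2 * y) i j = z i * z j"
    if "i < 4" "j < 4" for i j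
    using less_4_cases[OF that(1)] less_4_cases[OF that(2)]
    by (auto simp: moment_matrix_def mat_of_rows_def z_def power2_eq_square
        power3_eq_cube power4_eq_xxxx)
  then have "psd 4 (moment_matrix A B x y (x\<^sup>2) (x ^ 3) (x ^ 4) (x * y) (x\<^sup>2 * y))"
    using psd_outer[of 4 z] by (subst psd_cong[OF entries])
  then show "p \<in> moment_shadow A B"
    unfolding p moment_shadow_def by blast
qed

text \<open>The shadow is convex, since the moment matrix is affine in all its parameters.\<close>
lemma convex_moment_shadow: "convex (moment_shadow A B)"
  unfolding convex_alt
proof (intro ballI allI impI)
  fix p q and t :: real
  assume "p \<in> moment_shadow A B" "q \<in> moment_shadow A B" and t: "0 \<le> t \<and> t \<le> 1"
  then obtain x y u2 u3 u4 v1 v2 x' y' u2' u3' u4' v1' v2'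
    where pq: "p = (x, y)" "q = (x', y')"
      and M: "psd 4 (moment_matrix A B x y u2 u3 u4 v1 v2)"
      and N: "psd 4 (moment_matrix A B x' y' u2' u3' u4' v1' v2')"
    unfolding moment_shadow_def by blast
  define c where "c a a' = (1 - t) * a + t * a'" for a a' :: real
  have entries: "moment_matrix A B (c x x') (c y y') (c u2 u2') (c u3 u3') (c u4 u4') (c v1 v1') (c v2 v2') i j
      = (1 - t) * moment_matrix A B x y u2 u3 u4 v1 v2 i j
        + t * moment_matrix A B x' y' u2' u3' u4' v1' v2' i j"
    if "i < 4" "j < 4" for i j
    using less_4_cases[OF that(1)] less_4_cases[OF that(2)]
    by (auto simp: moment_matrix_def mat_of_rows_def c_def algebra_simps)
  have "psd 4 (moment_matrix A B (c x x') (c y y') (c u2 u2') (c u3 u3') (c u4 u4')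
      (c v1 v1') (c v2 v2'))"
    using psd_convex_comb[OF M N] t by (subst psd_cong[OF entries]) auto
  moreover have "(1 - t) *\<^sub>R p + t *\<^sub>R q = (c x x', c y y')"
    unfolding pq c_def by simp
  ultimately show "(1 - t) *\<^sub>R p + t *\<^sub>R q \<in> moment_shadow A B"
    unfolding moment_shadow_def by fastforce
qed

text \<open>The relaxation bounds: x^2 \<le> u2 and, using u2^2 \<le> u4, y^2 \<le> -B - A u2 - u2^2.\<close>
lemma moment_matrix_bounds:
  assumes "psd 4 (moment_matrix A B x y u2 u3 u4 v1 v2)"
  shows "x\<^sup>2 \<le> u2" "y\<^sup>2 \<le> - B - A * u2 - u2\<^sup>2"
proof -
  have entry: "(moment_matrix A B x y u2 u3 u4 v1 v2 0 k)\<^sup>2 \<le> moment_matrix A B x y u2 u3 u4 v1 v2 k k"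
    if "k < 4" "k \<noteq> 0" for k
    using psd_entry_sq_le[OF assms that] by (simp add: moment_matrix_def mat_of_rows_def)
  from entry[of 1] show "x\<^sup>2 \<le> u2" by (simp add: moment_matrix_def mat_of_rows_def)
  from entry[of 2] have "u2\<^sup>2 \<le> u4" by (simp add: moment_matrix_def mat_of_rows_def)
  moreover from entry[of 3] have "y\<^sup>2 \<le> - B - A * u2 - u4"
    by (simp add: moment_matrix_def mat_of_rows_def numeral_3_eq_3)
  ultimately show "y\<^sup>2 \<le> - B - A * u2 - u2\<^sup>2" by linarith
qed

text \<open>Conversely, every shadow point lies in the rectangle spanned by four curve points.\<close>
lemma moment_shadow_subset_hull: "moment_shadow A B \<subseteq> convex hull (quartic_curve A B)"
proof
  fix p assume "p \<in> moment_shadow A B"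
  then obtain x y u2 u3 u4 v1 v2 where p: "p = (x, y)"
    and M: "psd 4 (moment_matrix A B x y u2 u3 u4 v1 v2)"
    unfolding moment_shadow_def by blast
  define g where "g = - B - A * u2 - u2\<^sup>2"
  have x_le: "x\<^sup>2 \<le> u2" and y_le: "y\<^sup>2 \<le> g"
    using moment_matrix_bounds[OF M] by (simp_all add: g_def)
  have "0 \<le> u2" "0 \<le> g"
    using x_le y_le zero_le_power2[of x] zero_le_power2[of y] by linarith+
  define X Y where "X = sqrt u2" and "Y = sqrt g"
  have X2: "X\<^sup>2 = u2" and Y2: "Y\<^sup>2 = g"
    using \<open>0 \<le> u2\<close> \<open>0 \<le> g\<close> by (simp_all add: X_def Y_def)
  have corner: "(s, t) \<in> convex hull (quartic_curve A B)" if "s\<^sup>2 = u2" "t\<^sup>2 = g" for s t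
  proof (rule hull_inc)
    have "s ^ 4 = (s\<^sup>2)\<^sup>2" by (simp add: power4_eq_xxxx power2_eq_square)
    then show "(s, t) \<in> quartic_curve A B"
      using that by (simp add: quartic_curve_def g_def)
  qed
  have neg: "(- X)\<^sup>2 = u2" "(- Y)\<^sup>2 = g"
    using X2 Y2 by simp_all
  have bounds: "\<bar>x\<bar> \<le> X" "\<bar>y\<bar> \<le> Y"
    using real_sqrt_le_mono[OF x_le] real_sqrt_le_mono[OF y_le] by (simp_all add: X_def Y_def)
  show "p \<in> convex hull (quartic_curve A B)"
    unfolding p using convex_contains_box[OF convex_convex_hull corner[OF X2 Y2]
      corner[OF neg(1) Y2] corner[OF X2 neg(2)] corner[OF neg] bounds] .
qed

theorem convex_hull_quartic_curve:
  "convex hull (quartic_curve A B) = moment_shadow A B"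
  by (intro subset_antisym hull_minimal quartic_curve_subset_shadow convex_moment_shadow
      moment_shadow_subset_hull)

theorem mainTheorem11:
  fixes b A B :: real
  assumes "b > -1" and "b \<noteq> 0"
    and "A = b - 1" and "B = - b"
  shows "convex hull {(x::real, y::real). y^2 + (x^2 - 1) * (x^2 + b) = 0}
       = {(x::real, y::real). \<exists>u2 u3 u4 v1 v2 :: real.
            psd 4 (mat_of_rows
              [[1,  x,  u2, y],
               [x,  u2, u3, v1],
               [u2, u3, u4, v2],
               [y,  v1, v2, - B - A * u2 - u4]])}"
proof -
  have curve_eq: "y^2 + (x^2 - 1) * (x^2 + b) = y\<^sup>2 + x ^ 4 + A * x\<^sup>2 + B" for x y :: real
    unfolding assms(3,4) by (simp add: algebra_simps power2_eq_square power4_eq_xxxx)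
  have "{(x::real, y::real). y^2 + (x^2 - 1) * (x^2 + b) = 0} = quartic_curve A B"
    by (simp only: quartic_curve_def curve_eq)
  moreover have "{(x::real, y::real). \<exists>u2 u3 u4 v1 v2 :: real.
            psd 4 (mat_of_rows
              [[1,  x,  u2, y],
               [x,  u2, u3, v1],
               [u2, u3, u4, v2],
               [y,  v1, v2, - B - A * u2 - u4]])} = moment_shadow A B"
    by (simp add: moment_shadow_def moment_matrix_def)
  ultimately show ?thesis using convex_hull_quartic_curve by simp
qed

end
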